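(* Let $G$ be a finite simple forest with $\operatorname{mat}(G)\geq 2$, let $x$ be a distant leaf of $G$ with neighbor $y$. Then for any $2\leq k\leq\operatorname{mat}(G)$, \[\operatorname{aim}(G-\{x,y\},k-1)+1\leq\operatorname{aim}(G,k).\]
   Context: A leaf is a vertex of degree $1$; a leaf $x$ with unique neighbor $y$ is a distant leaf if $y$ has at most one neighbor of degree greater than $1$. $G-U$ is the induced subgraph on $V(G)\setminus U$. $\operatorname{mat}$ is the matching number. Two edges form a gap if they are disjoint and no edge of the graph joins a vertex of one to a vertex of the other. A sequence $(a_1,\dots,a_n)$ of integers is $k$-admissable if $a_i\ge1$ and $\sum a_i\le n+k-1$. For a graph $H$ and $1\le k\le\operatorname{mat}(H)$, a matching $M$ of $H$ is $k$-admissable if there are nonempty pairwise disjoint $M_1,\dots,M_r\subseteq M$ with union $M$ such that edges from different $M_i$'s always form a gap in $H$, $(|M_1|,\dots,|M_r|)$ is $k$-admissable, and the induced subgraph of $H$ on $\bigcup_{e\in M_i}e$ is a forest for each $i$. $\operatorname{aim}(H,k)$ is the maximum size of a $k$-admissable matching of $H$ ($0$ if none). *)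

theory Defs
  imports Main
begin

definition simple_graph :: "'a set \<Rightarrow> 'a set set \<Rightarrow> bool" where
  "simple_graph V E \<longleftrightarrow> finite V \<and> (\<forall>e\<in>E. e \<subseteq> V \<and> card e = 2)"

definition neighbors :: "'a set set \<Rightarrow> 'a \<Rightarrow> 'a set" where
  "neighbors E v = {u. {u, v} \<in> E}"

definition degree :: "'a set set \<Rightarrow> 'a \<Rightarrow> nat" where
  "degree E v = card (neighbors E v)"

definition is_cycle :: "'a set \<Rightarrow> 'a set set \<Rightarrow> 'a list \<Rightarrow> bool" where
  "is_cycle V E vs \<longleftrightarrow> length vs \<ge> 3 \<and> distinct vs \<and> set vs \<subseteq> V \<and>
     (\<forall>i. Suc i < length vs \<longrightarrow> {vs ! i, vs ! Suc i} \<in> E) \<and>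
     {last vs, hd vs} \<in> E"

definition forest :: "'a set \<Rightarrow> 'a set set \<Rightarrow> bool" where
  "forest V E \<longleftrightarrow> simple_graph V E \<and> \<not> (\<exists>vs. is_cycle V E vs)"

definition induced_edges :: "'a set set \<Rightarrow> 'a set \<Rightarrow> 'a set set" where
  "induced_edges E S = {e \<in> E. e \<subseteq> S}"

definition leaf :: "'a set set \<Rightarrow> 'a \<Rightarrow> bool" where
  "leaf E x \<longleftrightarrow> degree E x = 1"

definition distant_leaf :: "'a set set \<Rightarrow> 'a \<Rightarrow> 'a \<Rightarrow> bool" where
  "distant_leaf E x y \<longleftrightarrow> leaf E x \<and> neighbors E x = {y} \<and>
     card {z \<in> neighbors E y. degree E z > 1} \<le> 1"

definition matching :: "'a set set \<Rightarrow> 'a set set \<Rightarrow> bool" where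
  "matching E M \<longleftrightarrow> M \<subseteq> E \<and> (\<forall>e\<in>M. \<forall>f\<in>M. e \<noteq> f \<longrightarrow> e \<inter> f = {})"

definition mat :: "'a set set \<Rightarrow> nat" where
  "mat E = Max {card M | M. matching E M}"

definition gap :: "'a set set \<Rightarrow> 'a set \<Rightarrow> 'a set \<Rightarrow> bool" where
  "gap E e f \<longleftrightarrow> e \<inter> f = {} \<and> (\<forall>u\<in>e. \<forall>v\<in>f. {u, v} \<notin> E)"

definition admissable_seq :: "nat \<Rightarrow> nat list \<Rightarrow> bool" where
  "admissable_seq k as \<longleftrightarrow> (\<forall>a\<in>set as. a \<ge> 1) \<and>
     int (sum_list as) \<le> int (length as) + int k - 1"

definition admissable_matching :: "'a set \<Rightarrow> 'a set set \<Rightarrow> nat \<Rightarrow> 'a set set \<Rightarrow> bool" where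
  "admissable_matching V E k M \<longleftrightarrow> matching E M \<and>
     (\<exists>Ms :: 'a set set list.
        (\<forall>i<length Ms. Ms ! i \<noteq> {} \<and> Ms ! i \<subseteq> M) \<and>
        (\<forall>i<length Ms. \<forall>j<length Ms. i \<noteq> j \<longrightarrow> Ms ! i \<inter> Ms ! j = {}) \<and>
        \<Union> (set Ms) = M \<and>
        (\<forall>i<length Ms. \<forall>j<length Ms. i \<noteq> j \<longrightarrow>
            (\<forall>e\<in>Ms ! i. \<forall>f\<in>Ms ! j. gap E e f)) \<and>
        admissable_seq k (map card Ms) \<and>
        (\<forall>i<length Ms. forest (\<Union> (Ms ! i)) (induced_edges E (\<Union> (Ms ! i)))))"

definition aim :: "'a set \<Rightarrow> 'a set set \<Rightarrow> nat \<Rightarrow> nat" where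
  "aim V E k = Max (insert 0 {card M | M. admissable_matching V E k M})"

end

(*
  Let M be an optimal (k-1)-admissable matching of G - {x,y}, with blocks M_1, ..., M_r.
  As x is a leaf, the edge xy fails to form a gap with an edge of M only through a vertex v
  of that edge adjacent to y. Such a v has a second neighbour on its edge, so degree at least 2,
  and y has at most one neighbour of degree > 1; since M is a matching, xy thus forms a gap
  with all edges of M except possibly the single edge through v. If there is no such edge,
  {xy} becomes a new block (r and the sum of block sizes both grow by 1); otherwise xy joins
  the block of that edge (only the sum grows by 1). Either way the block sizes become
  k-admissable, and the forest condition on blocks is automatic in a forest.
*)

theory Submission
  imports Defs
begin

lemma simple_graph_finite_edges:
  assumes "simple_graph V E"
  shows "finite E"
proof (rule finite_subset)
  show "E \<subseteq> Pow V" using assms unfolding simple_graph_def by blast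
  show "finite (Pow V)" using assms unfolding simple_graph_def by simp
qed

lemma simple_graph_finite_neighbors:
  assumes "simple_graph V E"
  shows "finite (neighbors E v)"
proof (rule finite_subset)
  show "neighbors E v \<subseteq> V" using assms unfolding simple_graph_def neighbors_def by blast
  show "finite V" using assms unfolding simple_graph_def by simp
qed

lemma one_less_degree:
  assumes "simple_graph V E" "{u, v} \<in> E" "{w, v} \<in> E" "u \<noteq> w"
  shows "1 < degree E v"
proof -
  have "{u, w} \<subseteq> neighbors E v" using assms(2,3) unfolding neighbors_def by blast
  then have "card {u, w} \<le> degree E v"
    unfolding degree_def using simple_graph_finite_neighbors[OF assms(1)] by (rule card_mono[rotated])
  then show ?thesis using assms(4) by simp
qed

lemma simple_graph_edgeE:
  assumes "simple_graph V E" "f \<in> E" "v \<in> f"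
  obtains u where "u \<noteq> v" "f = {u, v}"
proof -
  have "card f = 2" using assms(1,2) unfolding simple_graph_def by blast
  then obtain a b where ab: "a \<noteq> b" "f = {a, b}" by (meson card_2_iff)
  show ?thesis
  proof (cases "v = a")
    case True
    with ab that[of b] show ?thesis by (simp add: insert_commute)
  next
    case False
    with ab assms(3) that[of a] show ?thesis by simp
  qed
qed

lemma forest_induced_edges:
  assumes "forest V E" "S \<subseteq> V"
  shows "forest S (induced_edges E S)"
proof -
  have "simple_graph S (induced_edges E S)"
    using assms finite_subset unfolding forest_def simple_graph_def induced_edges_def by auto
  moreover have "is_cycle V E vs" if "is_cycle S (induced_edges E S) vs" for vs
    using that assms(2) unfolding is_cycle_def induced_edges_def by blast
  ultimately show ?thesis using assms(1) unfolding forest_def by blast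
qed

lemma gap_sym: "gap E e f \<Longrightarrow> gap E f e"
  unfolding gap_def by (metis inf_commute insert_commute)

lemma gap_induced_edges_iff:
  assumes "e \<subseteq> S" "f \<subseteq> S"
  shows "gap (induced_edges E S) e f \<longleftrightarrow> gap E e f"
  using assms unfolding gap_def induced_edges_def by blast

definition gap_partition :: "'a set set \<Rightarrow> 'a set set \<Rightarrow> 'a set set list \<Rightarrow> bool" where
  "gap_partition E M Ms \<longleftrightarrow>
     (\<forall>i<length Ms. Ms ! i \<noteq> {} \<and> Ms ! i \<subseteq> M) \<and>
     (\<forall>i<length Ms. \<forall>j<length Ms. i \<noteq> j \<longrightarrow> Ms ! i \<inter> Ms ! j = {}) \<and>
     \<Union> (set Ms) = M \<and>
     (\<forall>i<length Ms. \<forall>j<length Ms. i \<noteq> j \<longrightarrow> (\<forall>e\<in>Ms ! i. \<forall>f\<in>Ms ! j. gap E e f))"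

lemma gap_partition_block_subset:
  "gap_partition E M Ms \<Longrightarrow> i < length Ms \<Longrightarrow> Ms ! i \<subseteq> M"
  by (simp add: gap_partition_def)

lemma admissable_matching_iff:
  "admissable_matching V E k M \<longleftrightarrow> matching E M \<and>
     (\<exists>Ms. gap_partition E M Ms \<and> admissable_seq k (map card Ms) \<and>
        (\<forall>i<length Ms. forest (\<Union> (Ms ! i)) (induced_edges E (\<Union> (Ms ! i)))))"
  unfolding admissable_matching_def gap_partition_def by blast

lemma admissable_matching_forestI:
  assumes "forest V E" "matching E M" "gap_partition E M Ms" "admissable_seq k (map card Ms)"
  shows "admissable_matching V E k M"
proof -
  have "\<Union> (Ms ! i) \<subseteq> V" if "i < length Ms" for i
  proof -
    have "Ms ! i \<subseteq> E"
      using assms(2,3) that unfolding gap_partition_def matching_def by blast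
    then show ?thesis using assms(1) unfolding forest_def simple_graph_def by blast
  qed
  then have "\<forall>i<length Ms. forest (\<Union> (Ms ! i)) (induced_edges E (\<Union> (Ms ! i)))"
    using forest_induced_edges[OF assms(1)] by blast
  with assms(2-4) show ?thesis
    unfolding admissable_matching_iff by blast
qed

lemma gap_partition_obtain_block:
  assumes "gap_partition E M Ms" "e \<in> M"
  obtains i where "i < length Ms" "e \<in> Ms ! i"
proof -
  from assms have "e \<in> \<Union> (set Ms)" by (simp add: gap_partition_def)
  then show ?thesis using that by (metis UnionE in_set_conv_nth)
qed

lemma gap_partition_mono:
  assumes "gap_partition E M Ms" "\<And>e f. e \<in> M \<Longrightarrow> f \<in> M \<Longrightarrow> gap E e f \<Longrightarrow> gap E' e f"
  shows "gap_partition E' M Ms"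
  using assms(1)[unfolded gap_partition_def] assms(2) unfolding gap_partition_def by (meson subsetD)

lemma Union_set_list_update_insert:
  assumes "i < length Ms"
  shows "\<Union> (set (Ms[i := insert a (Ms ! i)])) = insert a (\<Union> (set Ms))"
proof -
  have "set Ms = insert (Ms ! i) (set (take i Ms) \<union> set (drop (Suc i) Ms))"
    using set_list_update[OF assms, of "Ms ! i"] by simp
  then show ?thesis using set_list_update[OF assms] by auto
qed

lemma gap_partition_insert_block:
  assumes "gap_partition E M Ms" "i < length Ms" "a \<notin> M" "\<forall>f\<in>M - Ms ! i. gap E a f"
  shows "gap_partition E (insert a M) (Ms[i := insert a (Ms ! i)])"
proof -
  note part = assms(1)[unfolded gap_partition_def]
  have "gap E a f \<and> gap E f a" if "j < length Ms" "j \<noteq> i" "f \<in> Ms ! j" for j f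
  proof -
    have "f \<in> M - Ms ! i" using part assms(2) that by blast
    then show ?thesis using assms(4) gap_sym by blast
  qed
  then show ?thesis
    using part assms(2,3) Union_set_list_update_insert[OF assms(2)]
    unfolding gap_partition_def by (auto simp: nth_list_update)
qed

lemma gap_partition_snoc:
  assumes "gap_partition E M Ms" "a \<notin> M" "\<forall>f\<in>M. gap E a f"
  shows "gap_partition E (insert a M) (Ms @ [{a}])"
  using assms(1)[unfolded gap_partition_def] assms(2,3)
  unfolding gap_partition_def by (auto simp: nth_append less_Suc_eq intro: gap_sym)

lemma admissable_seq_snoc_one:
  "admissable_seq k as \<Longrightarrow> admissable_seq (Suc k) (as @ [1])"
  unfolding admissable_seq_def by auto

lemma admissable_seq_increment:
  assumes "admissable_seq k as" "i < length as"
  shows "admissable_seq (Suc k) (as[i := Suc (as ! i)])"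
proof -
  have "sum_list (as[i := Suc (as ! i)]) = Suc (sum_list as)"
    using assms(2) by (simp add: sum_list_update)
  moreover have "\<forall>a\<in>set (as[i := Suc (as ! i)]). 1 \<le> a"
    using assms(1) set_update_subset_insert unfolding admissable_seq_def by fastforce
  ultimately show ?thesis using assms(1) unfolding admissable_seq_def by simp
qed

lemma distant_leaf_edge: "distant_leaf E x y \<Longrightarrow> {x, y} \<in> E"
  unfolding distant_leaf_def neighbors_def by (auto simp: insert_commute)

lemma distant_leaf_gap:
  assumes "distant_leaf E x y" "x \<notin> f" "y \<notin> f" "\<forall>v\<in>f. {y, v} \<notin> E"
  shows "gap E {x, y} f"
proof -
  have "{x, v} \<notin> E" if "v \<in> f" for v
  proof
    assume "{x, v} \<in> E"
    then have "v \<in> neighbors E x" unfolding neighbors_def by (simp add: insert_commute)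
    with assms(1,3) that show False unfolding distant_leaf_def by auto
  qed
  with assms(2-4) show ?thesis unfolding gap_def by blast
qed

lemma distant_leaf_neighbor_unique:
  assumes "simple_graph V E" "distant_leaf E x y"
    and "f \<in> E" "y \<notin> f" "v \<in> f" "{y, v} \<in> E"
    and "g \<in> E" "y \<notin> g" "w \<in> g" "{y, w} \<in> E"
  shows "v = w"
proof -
  define Z where "Z = {z \<in> neighbors E y. 1 < degree E z}"
  have non_leaf: "u \<in> Z" if h: "h \<in> E" "y \<notin> h" "u \<in> h" "{y, u} \<in> E" for h u
  proof -
    obtain u' where "h = {u', u}" using simple_graph_edgeE assms(1) h(1,3) .
    with h(1,2) have "{u', u} \<in> E" "y \<noteq> u'" by auto
    then have "1 < degree E u" using one_less_degree[OF assms(1) h(4)] by blast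
    with h(4) show ?thesis unfolding Z_def neighbors_def by (simp add: insert_commute)
  qed
  have "finite Z" unfolding Z_def using simple_graph_finite_neighbors[OF assms(1)] by simp
  moreover have "card Z \<le> Suc 0" using assms(2) unfolding distant_leaf_def Z_def by simp
  ultimately have "\<forall>a\<in>Z. \<forall>b\<in>Z. a = b" by (simp add: card_le_Suc0_iff_eq)
  then show ?thesis using non_leaf[OF assms(3-6)] non_leaf[OF assms(7-10)] by blast
qed

lemma distant_leaf_gap_matching:
  assumes "simple_graph V E" "distant_leaf E x y"
    and "matching E M" "\<forall>f\<in>M. x \<notin> f \<and> y \<notin> f"
    and "f0 \<in> M" "v0 \<in> f0" "{y, v0} \<in> E" "f \<in> M" "f \<noteq> f0"
  shows "gap E {x, y} f"
proof -
  have "M \<subseteq> E" "v0 \<notin> f" using assms(3,5,6,8,9) unfolding matching_def by blast+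
  have "{y, v} \<notin> E" if "v \<in> f" for v
  proof
    assume "{y, v} \<in> E"
    with that assms(4,5,7,8) \<open>M \<subseteq> E\<close> have "v0 = v"
      using distant_leaf_neighbor_unique[OF assms(1,2) _ _ assms(6)] by blast
    with \<open>v0 \<notin> f\<close> that show False by blast
  qed
  with assms(4,8) show ?thesis using distant_leaf_gap[OF assms(2)] by blast
qed

lemma admissable_matching_empty: "1 \<le> k \<Longrightarrow> admissable_matching V E k {}"
  unfolding admissable_matching_def matching_def admissable_seq_def
  by (intro conjI exI[of _ "[]"]) auto

lemma finite_admissable_matching_cards:
  assumes "finite E"
  shows "finite {card M | M. admissable_matching V E k M}"
proof (rule finite_subset)
  show "{card M | M. admissable_matching V E k M} \<subseteq> {..card E}"
    using assms card_mono unfolding admissable_matching_def matching_def by fastforce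
qed simp

lemma card_le_aim:
  assumes "finite E" "admissable_matching V E k M"
  shows "card M \<le> aim V E k"
  unfolding aim_def using assms finite_admissable_matching_cards by (intro Max_ge) auto

lemma aim_attained:
  assumes "finite E" "1 \<le> k"
  obtains M where "admissable_matching V E k M" "card M = aim V E k"
proof -
  let ?S = "{card M | M. admissable_matching V E k M}"
  have "admissable_matching V E k {}" by (rule admissable_matching_empty[OF assms(2)])
  then have "card ({} :: 'a set set) \<in> ?S" by blast
  then have "0 \<in> ?S" by simp
  then have "aim V E k = Max ?S" unfolding aim_def by (simp only: insert_absorb)
  also have "\<dots> \<in> ?S"
    using \<open>0 \<in> ?S\<close> finite_admissable_matching_cards[OF assms(1)] by (intro Max_in) auto
  finally obtain M where "admissable_matching V E k M" "aim V E k = card M" by blast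
  with that show ?thesis by simp
qed

lemma admissable_matching_insert_distant_leaf_edge:
  assumes "forest V E" "distant_leaf E x y"
    and "admissable_matching (V - {x, y}) (induced_edges E (V - {x, y})) k M"
  shows "admissable_matching V E (Suc k) (insert {x, y} M)"
proof -
  have graph: "simple_graph V E" using assms(1) unfolding forest_def by blast
  obtain Ms where matching': "matching (induced_edges E (V - {x, y})) M"
    and part': "gap_partition (induced_edges E (V - {x, y})) M Ms"
    and seq: "admissable_seq k (map card Ms)"
    using assms(3) unfolding admissable_matching_iff by blast
  have matching: "matching E M" and avoid: "\<forall>f\<in>M. f \<subseteq> V - {x, y}"
    using matching' unfolding matching_def induced_edges_def by auto
  then have "finite M"
    using simple_graph_finite_edges[OF graph] finite_subset unfolding matching_def by blast
  have avoid_xy: "\<forall>f\<in>M. x \<notin> f \<and> y \<notin> f" using avoid by blast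
  then have new: "{x, y} \<notin> M" by blast
  have "matching E (insert {x, y} M)"
    using matching distant_leaf_edge[OF assms(2)] avoid_xy unfolding matching_def by blast
  moreover have part: "gap_partition E M Ms"
  proof (rule gap_partition_mono[OF part'])
    fix e f assume "e \<in> M" "f \<in> M" "gap (induced_edges E (V - {x, y})) e f"
    then show "gap E e f" using gap_induced_edges_iff avoid by blast
  qed
  have "\<exists>Ms'. gap_partition E (insert {x, y} M) Ms' \<and> admissable_seq (Suc k) (map card Ms')"
  proof (cases "\<exists>f\<in>M. \<exists>v\<in>f. {y, v} \<in> E")
    case False
    then have "\<forall>f\<in>M. gap E {x, y} f" using avoid_xy distant_leaf_gap[OF assms(2)] by blast
    then have "gap_partition E (insert {x, y} M) (Ms @ [{{x, y}}])"
      using gap_partition_snoc[OF part new] by blast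
    moreover have "admissable_seq (Suc k) (map card (Ms @ [{{x, y}}]))"
      using admissable_seq_snoc_one[OF seq] by simp
    ultimately show ?thesis by blast
  next
    case True
    then obtain f0 v0 where f0: "f0 \<in> M" "v0 \<in> f0" "{y, v0} \<in> E" by blast
    then obtain i where i: "i < length Ms" "f0 \<in> Ms ! i"
      using gap_partition_obtain_block[OF part] by blast
    have "\<forall>f\<in>M - Ms ! i. gap E {x, y} f"
      using distant_leaf_gap_matching[OF graph assms(2) matching avoid_xy f0] i(2) by blast
    then have "gap_partition E (insert {x, y} M) (Ms[i := insert {x, y} (Ms ! i)])"
      using gap_partition_insert_block[OF part i(1) new] by blast
    moreover have "card (insert {x, y} (Ms ! i)) = Suc (card (Ms ! i))"
      using gap_partition_block_subset[OF part i(1)] \<open>finite M\<close> new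
      by (meson card_insert_disjoint finite_subset subsetD)
    then have "map card (Ms[i := insert {x, y} (Ms ! i)]) = (map card Ms)[i := Suc (map card Ms ! i)]"
      using i(1) by (simp add: map_update)
    then have "admissable_seq (Suc k) (map card (Ms[i := insert {x, y} (Ms ! i)]))"
      using admissable_seq_increment[OF seq] i(1) by simp
    ultimately show ?thesis by blast
  qed
  ultimately show ?thesis using admissable_matching_forestI[OF assms(1)] by blast
qed

theorem lemma4p5:
  fixes V :: "'a set" and E :: "'a set set" and x y :: 'a and k :: nat
  assumes "forest V E"
    and "mat E \<ge> 2"
    and "x \<in> V" and "distant_leaf E x y"
    and "2 \<le> k" and "k \<le> mat E"
  shows "aim (V - {x, y}) (induced_edges E (V - {x, y})) (k - 1) + 1 \<le> aim V E k"
proof -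
  let ?V' = "V - {x, y}" and ?E' = "induced_edges E (V - {x, y})"
  have "finite E" using assms(1) simple_graph_finite_edges unfolding forest_def by blast
  then have "finite ?E'" unfolding induced_edges_def by simp
  moreover have "1 \<le> k - 1" using assms(5) by simp
  ultimately obtain M where M: "admissable_matching ?V' ?E' (k - 1) M" "card M = aim ?V' ?E' (k - 1)"
    by (rule aim_attained)
  have "M \<subseteq> ?E'" using M(1) unfolding admissable_matching_def matching_def by blast
  then have "finite M" "{x, y} \<notin> M"
    using \<open>finite ?E'\<close> finite_subset unfolding induced_edges_def by auto
  then have card_insert: "card (insert {x, y} M) = card M + 1" by simp
  have "Suc (k - 1) = k" using assms(5) by simp
  then have "admissable_matching V E k (insert {x, y} M)"
    using admissable_matching_insert_distant_leaf_edge[OF assms(1,4) M(1)] by simp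
  then have "card (insert {x, y} M) \<le> aim V E k" by (rule card_le_aim[OF \<open>finite E\<close>])
  with card_insert M(2) show ?thesis by simp
qed

end
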